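(* Let $S$ be a state of a $d$-dimensional Hegselmann–Krause system with social network $G=(V,E)$ and confidence bound $\varepsilon>0$, with influence network $(V,E_I)$, and let $e=\{u,w\}\in E_I$ with $x_u\ne x_w$. Let $\bar S_e$ be the projected state along $e$. Then: (1) $\|x_u-x_w\|_2=|\bar x_u-\bar x_w|$; (2) $N_v=\bar N_v$ for every $v\in V$; (3) $\sum_{v\in V}|N_v|\,\|m_v\|_2\ \ge\ \sum_{v\in V}|\bar N_v|\,|\bar m_v|$.
   Context: A $d$-dimensional Hegselmann–Krause system has a finite undirected graph $G=(V,E)$ (social network), a confidence bound $\varepsilon>0$, and a state given by positions $x_v\in\mathbb{R}^d$, $v\in V$. In a state, the influencing neighborhood of $v$ is $N_v=\{u:\{u,v\}\in E,\ \|x_u-x_v\|_2\le\varepsilon\}\cup\{v\}$, the movement of $v$ is $m_v=\frac{1}{|N_v|}\sum_{u\in N_v}(x_u-x_v)$, and the influence network is $(V,E_I)$ with $E_I=\{\{u,v\}\in E:\|x_u-x_v\|_2\le\varepsilon\}$. For an edge $e=\{u,w\}\in E_I$, let $p=(x_u-x_w)/\|x_u-x_w\|_2$ (the order of $u,w$ chosen arbitrarily). The projected state $\bar S_e$ is the state of the $1$-dimensional HKS with social network $(V,E_I)$, the same confidence bound $\varepsilon$, and positions $\bar x_v=x_v^\top p\in\mathbb{R}$. In $\bar S_e$, $\bar N_v=\{u:\{u,v\}\in E_I,\ |\bar x_u-\bar x_v|\le\varepsilon\}\cup\{v\}$ and $\bar m_v=\frac{1}{|\bar N_v|}\sum_{u\in\bar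 N_v}(\bar x_u-\bar x_v)$. *)

theory Defs
  imports "HOL-Analysis.Analysis"
begin

text \<open>A Hegselmann-Krause system: a finite social network (V, E), where E is a set of
  2-element subsets of V, a confidence bound eps, and positions x in a real normed
  vector space (R^d for the d-dimensional system, the reals for the 1-dimensional one).\<close>

definition social_network :: "'v set \<Rightarrow> 'v set set \<Rightarrow> bool" where
  "social_network V E \<longleftrightarrow> finite V \<and>
     (\<forall>e\<in>E. \<exists>a b. a \<in> V \<and> b \<in> V \<and> a \<noteq> b \<and> e = {a, b})"

definition nbhd :: "'v set \<Rightarrow> 'v set set \<Rightarrow> real \<Rightarrow> ('v \<Rightarrow> 'a::real_normed_vector) \<Rightarrow> 'v \<Rightarrow> 'v set" where
  "nbhd V E eps x v = {u \<in> V. {u, v} \<in> E \<and> norm (x u - x v) \<le> eps} \<union> {v}"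

definition movement :: "'v set \<Rightarrow> 'v set set \<Rightarrow> real \<Rightarrow> ('v \<Rightarrow> 'a::real_normed_vector) \<Rightarrow> 'v \<Rightarrow> 'a" where
  "movement V E eps x v =
     (1 / real (card (nbhd V E eps x v))) *\<^sub>R (\<Sum>u\<in>nbhd V E eps x v. x u - x v)"

definition influence_edges :: "'v set \<Rightarrow> 'v set set \<Rightarrow> real \<Rightarrow> ('v \<Rightarrow> 'a::real_normed_vector) \<Rightarrow> 'v set set" where
  "influence_edges V E eps x = {e \<in> E. \<forall>a b. e = {a, b} \<longrightarrow> norm (x a - x b) \<le> eps}"

definition proj_pos :: "('v \<Rightarrow> 'a::real_inner) \<Rightarrow> 'v \<Rightarrow> 'v \<Rightarrow> 'v \<Rightarrow> real" where
  "proj_pos x u w v = x v \<bullet> ((1 / norm (x u - x w)) *\<^sub>R (x u - x w))"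

end

theory Submission
  imports Defs
begin

text \<open>Projection onto the unit vector p along the edge is linear and does not increase
  distances. So pairs within distance eps stay within eps, the projected neighbourhoods on the
  influence network are the original ones, and each projected movement is the projection of the
  original movement, hence no longer. Since sgn 0 = 0 makes the projection the zero map when
  x u = x w, none of the hypotheses of the theorem is actually needed.\<close>

lemma influence_edges_doubleton_iff:
  "{a, b} \<in> influence_edges V E eps x \<longleftrightarrow> {a, b} \<in> E \<and> norm (x a - x b) \<le> eps"
  unfolding influence_edges_def by (auto simp: doubleton_eq_iff norm_minus_commute)

lemma nbhd_influence_edges_nonexpansive:
  fixes x :: "'v \<Rightarrow> 'a::real_normed_vector" and y :: "'v \<Rightarrow> 'b::real_normed_vector"
  assumes "\<And>a b. norm (y a - y b) \<le> norm (x a - x b)"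
  shows "nbhd V (influence_edges V E eps x) eps y v = nbhd V E eps x v"
  unfolding nbhd_def influence_edges_doubleton_iff
  using assms by (fastforce intro: order_trans)

lemma nbhd_influence_edges_linear_image:
  fixes x :: "'v \<Rightarrow> 'a::real_normed_vector" and f :: "'a \<Rightarrow> 'b::real_normed_vector"
  assumes "linear f" and "\<And>z. norm (f z) \<le> norm z"
  shows "nbhd V (influence_edges V E eps x) eps (f \<circ> x) v = nbhd V E eps x v"
  using assms by (intro nbhd_influence_edges_nonexpansive) (simp flip: linear_diff)

lemma movement_linear_image:
  fixes x :: "'v \<Rightarrow> 'a::real_normed_vector" and f :: "'a \<Rightarrow> 'b::real_normed_vector"
  assumes "linear f" and "nbhd V E' eps' (f \<circ> x) v = nbhd V E eps x v"
  shows "movement V E' eps' (f \<circ> x) v = f (movement V E eps x v)"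
  using assms unfolding movement_def
  by (simp add: linear_scale linear_sum linear_diff)

lemma weighted_movement_sum_linear_image_le:
  fixes x :: "'v \<Rightarrow> 'a::real_normed_vector" and f :: "'a \<Rightarrow> 'b::real_normed_vector"
  assumes "linear f" and nonexp: "\<And>z. norm (f z) \<le> norm z"
  shows "(\<Sum>v\<in>V. real (card (nbhd V (influence_edges V E eps x) eps (f \<circ> x) v))
                  * norm (movement V (influence_edges V E eps x) eps (f \<circ> x) v))
         \<le> (\<Sum>v\<in>V. real (card (nbhd V E eps x v)) * norm (movement V E eps x v))"
proof (rule sum_mono)
  fix v
  have nbhd_eq: "nbhd V (influence_edges V E eps x) eps (f \<circ> x) v = nbhd V E eps x v"
    using assms by (rule nbhd_influence_edges_linear_image)
  then show "real (card (nbhd V (influence_edges V E eps x) eps (f \<circ> x) v))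
               * norm (movement V (influence_edges V E eps x) eps (f \<circ> x) v)
             \<le> real (card (nbhd V E eps x v)) * norm (movement V E eps x v)"
    by (simp add: movement_linear_image[OF \<open>linear f\<close> nbhd_eq] nonexp mult_left_mono)
qed

lemma proj_pos_eq_inner_sgn: "proj_pos x u w = (\<lambda>z. z \<bullet> sgn (x u - x w)) \<circ> x"
  by (simp add: proj_pos_def sgn_div_norm divide_inverse_commute fun_eq_iff)

lemma abs_inner_sgn_le_norm: "\<bar>z \<bullet> sgn d\<bar> \<le> norm z"
  using Cauchy_Schwarz_ineq2[of z "sgn d"] by (simp add: norm_sgn split: if_splits)

lemma proj_pos_dist_endpoints: "\<bar>proj_pos x u w u - proj_pos x u w w\<bar> = norm (x u - x w)"
proof -
  have "proj_pos x u w u - proj_pos x u w w = (x u - x w) \<bullet> sgn (x u - x w)"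
    by (simp add: proj_pos_eq_inner_sgn inner_diff_left)
  also have "\<dots> = norm (x u - x w)"
    by (cases "x u = x w")
      (simp_all add: sgn_div_norm power2_norm_eq_inner[symmetric] power2_eq_square)
  finally show ?thesis by simp
qed

theorem lemma1:
  fixes V :: "'v set" and E :: "'v set set" and eps :: real
    and x :: "'v \<Rightarrow> 'a::euclidean_space" and u w :: 'v
  assumes "social_network V E"
    and "eps > 0"
    and "{u, w} \<in> influence_edges V E eps x"
    and "x u \<noteq> x w"
  shows "norm (x u - x w) = \<bar>proj_pos x u w u - proj_pos x u w w\<bar>
    \<and> (\<forall>v\<in>V. nbhd V E eps x v
                = nbhd V (influence_edges V E eps x) eps (proj_pos x u w) v)
    \<and> ((\<Sum>v\<in>V. real (card (nbhd V E eps x v)) * norm (movement V E eps x v))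
         \<ge> (\<Sum>v\<in>V. real (card (nbhd V (influence_edges V E eps x) eps (proj_pos x u w) v))
                     * \<bar>movement V (influence_edges V E eps x) eps (proj_pos x u w) v\<bar>))"
proof -
  define f where "f = (\<lambda>z::'a. z \<bullet> sgn (x u - x w))"
  have proj: "proj_pos x u w = f \<circ> x"
    by (simp add: f_def proj_pos_eq_inner_sgn)
  have lin: "linear f"
    unfolding f_def by (intro bounded_linear.linear bounded_linear_inner_left)
  have nonexp: "norm (f z) \<le> norm z" for z
    by (simp add: f_def abs_inner_sgn_le_norm)
  have "nbhd V (influence_edges V E eps x) eps (proj_pos x u w) v = nbhd V E eps x v" for v
    unfolding proj using lin nonexp by (rule nbhd_influence_edges_linear_image)
  moreover have "(\<Sum>v\<in>V. real (card (nbhd V (influence_edges V E eps x) eps (proj_pos x u w) v))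
                  * \<bar>movement V (influence_edges V E eps x) eps (proj_pos x u w) v\<bar>)
         \<le> (\<Sum>v\<in>V. real (card (nbhd V E eps x v)) * norm (movement V E eps x v))"
    using weighted_movement_sum_linear_image_le[OF lin nonexp] by (simp add: proj)
  ultimately show ?thesis
    by (simp add: proj_pos_dist_endpoints)
qed

end
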